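(* For any set of rule schemes $\mathcal{R}\subseteq\{N,H,P,F,wF\}$, every sequent derivable in $i\mathbf{STL}(\mathcal{R})$ is valid in every $\mathbf{K}(\mathcal{R})$-Kripke model.
   Context: Formulas of $\mathcal{L}_\nabla$ are built from variables and constants $1,\top,\bot$ by $\wedge,\vee,\otimes,\to$ and unary $\nabla$. Sequents $\Gamma\Rightarrow A$ have $\Gamma$ a finite sequence; $\nabla\Gamma$ applies $\nabla$ to each member. $\mathbf{STL}$ has axioms $A\Rightarrow A$, $\Rightarrow1$, $\nabla1\Rightarrow1$, $\Gamma\Rightarrow\top$, $\Gamma,\bot,\Sigma\Rightarrow A$ and rules (premises / conclusion): cut: $\Gamma\Rightarrow A$, $\Pi,A,\Sigma\Rightarrow B$ / $\Pi,\Gamma,\Sigma\Rightarrow B$; $L\wedge$: $\Gamma,A,\Sigma\Rightarrow C$ / $\Gamma,A\wedge B,\Sigma\Rightarrow C$ and $\Gamma,B,\Sigma\Rightarrow C$ / $\Gamma,A\wedge B,\Sigma\Rightarrow C$; $R\wedge$: $\Gamma\Rightarrow A$, $\Gamma\Rightarrow B$ / $\Gamma\Rightarrow A\wedge B$; $L\vee$: $\Gamma,A,\Sigma\Rightarrow C$, $\Gamma,B,\Sigma\Rightarrow C$ / $\Gamma,A\vee B,\Sigma\Rightarrow C$; $R\vee$: $\Gamma\Rightarrow A$ / $\Gamma\Rightarrow A\vee B$ and $\Gamma\Rightarrow B$ / $\Gamma\Rightarrow A\vee B$; $L1$: $\Gamma,\Sigma\Rightarrow A$ / $\Gamma,1,\Sigma\Rightarrow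 A$; $L\otimes$: $\Gamma,A,B,\Sigma\Rightarrow C$ / $\Gamma,A\otimes B,\Sigma\Rightarrow C$; $R\otimes$: $\Gamma\Rightarrow A$, $\Sigma\Rightarrow B$ / $\Gamma,\Sigma\Rightarrow A\otimes B$; $(\nabla)$: $A\Rightarrow B$ / $\nabla A\Rightarrow\nabla B$; Oplax: $\nabla A,\nabla B\Rightarrow C$ / $\nabla(A\otimes B)\Rightarrow C$; $L\to$: $\Gamma\Rightarrow A$, $\Pi,B,\Sigma\Rightarrow C$ / $\Pi,\Gamma,\nabla(A\to B),\Sigma\Rightarrow C$; $R\to$: $A,\nabla\Gamma\Rightarrow B$ / $\Gamma\Rightarrow A\to B$. Schemes: $(N)$: $\Gamma\Rightarrow A$ / $\nabla\Gamma\Rightarrow\nabla A$; $(P)$: $\Gamma\Rightarrow\nabla A$ / $\Gamma\Rightarrow A$; $(F)$: $\Gamma\Rightarrow A$ / $\Gamma\Rightarrow\nabla A$; $(wF)$: $\nabla A\Rightarrow\bot$ / $A\Rightarrow\bot$; $(H)$: $\Gamma,A_1\to B_1,\dots,A_n\to B_n\Rightarrow C$ / $\nabla\Gamma,\nabla A_1\to\nabla B_1,\dots,\nabla A_n\to\nabla B_n\Rightarrow\nabla C$. $i\mathbf{STL}(\mathcal{R})$ is $\mathbf{STL}$ plus the schemes in $\mathcal{R}$ plus left weakening, contraction and exchange. A Kripke model is $(W,\le,R,V)$: $(W,\le)$ a poset, $R\subseteq W\times W$ with $(u,v)\in R$, $u'\le u$, $v\le v'$ implying $(u',v')\in R$,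 and $V$ assigning an upset of $(W,\le)$ to each variable. Forcing: $w\Vdash p$ iff $w\in V(p)$; $w\Vdash\top$ and $w\Vdash1$ always; never $w\Vdash\bot$; $w\Vdash A\wedge B$ and $w\Vdash A\otimes B$ iff $w\Vdash A$ and $w\Vdash B$; $w\Vdash A\vee B$ iff $w\Vdash A$ or $w\Vdash B$; $w\Vdash A\to B$ iff for all $v$ with $(w,v)\in R$, $v\Vdash A$ implies $v\Vdash B$; $w\Vdash\nabla A$ iff there is $v$ with $(v,w)\in R$ and $v\Vdash A$. $\Gamma\Rightarrow A$ is valid if every $w$ forcing all members of $\Gamma$ forces $A$. A $\mathbf{K}(\mathcal{R})$-Kripke model satisfies the conditions for each scheme in $\mathcal{R}$: $(N)$: there is an order-preserving $\pi:W\to W$ with $(u,v)\in R$ iff $u\le\pi(v)$; $(H)$: such a $\pi$ exists and is an order isomorphism; $(P)$: $R\subseteq\le$; $(F)$: $R$ reflexive; $(wF)$: $R$ serial. *)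

theory Defs
  imports Main
begin

datatype 'v fm =
    Var 'v
  | One
  | Top
  | Bot
  | And "'v fm" "'v fm"
  | Or "'v fm" "'v fm"
  | Tensor "'v fm" "'v fm"
  | Imp "'v fm" "'v fm"
  | Nab "'v fm"

datatype scheme = N | H | P | F | wF

inductive derivable :: "scheme set \<Rightarrow> 'v fm list \<Rightarrow> 'v fm \<Rightarrow> bool" for R :: "scheme set" where
  ax_id: "derivable R [A] A"
| ax_one: "derivable R [] One"
| ax_nab_one: "derivable R [Nab One] One"
| ax_top: "derivable R \<Gamma> Top"
| ax_bot: "derivable R (\<Gamma> @ Bot # \<Sigma>) A"
| cut: "derivable R \<Gamma> A \<Longrightarrow> derivable R (\<Pi> @ A # \<Sigma>) B \<Longrightarrow> derivable R (\<Pi> @ \<Gamma> @ \<Sigma>) B"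
| L_and1: "derivable R (\<Gamma> @ A # \<Sigma>) C \<Longrightarrow> derivable R (\<Gamma> @ And A B # \<Sigma>) C"
| L_and2: "derivable R (\<Gamma> @ B # \<Sigma>) C \<Longrightarrow> derivable R (\<Gamma> @ And A B # \<Sigma>) C"
| R_and: "derivable R \<Gamma> A \<Longrightarrow> derivable R \<Gamma> B \<Longrightarrow> derivable R \<Gamma> (And A B)"
| L_or: "derivable R (\<Gamma> @ A # \<Sigma>) C \<Longrightarrow> derivable R (\<Gamma> @ B # \<Sigma>) C \<Longrightarrow> derivable R (\<Gamma> @ Or A B # \<Sigma>) C"
| R_or1: "derivable R \<Gamma> A \<Longrightarrow> derivable R \<Gamma> (Or A B)"
| R_or2: "derivable R \<Gamma> B \<Longrightarrow> derivable R \<Gamma> (Or A B)"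
| L_one: "derivable R (\<Gamma> @ \<Sigma>) A \<Longrightarrow> derivable R (\<Gamma> @ One # \<Sigma>) A"
| L_tensor: "derivable R (\<Gamma> @ A # B # \<Sigma>) C \<Longrightarrow> derivable R (\<Gamma> @ Tensor A B # \<Sigma>) C"
| R_tensor: "derivable R \<Gamma> A \<Longrightarrow> derivable R \<Sigma> B \<Longrightarrow> derivable R (\<Gamma> @ \<Sigma>) (Tensor A B)"
| nab: "derivable R [A] B \<Longrightarrow> derivable R [Nab A] (Nab B)"
| oplax: "derivable R [Nab A, Nab B] C \<Longrightarrow> derivable R [Nab (Tensor A B)] C"
| L_imp: "derivable R \<Gamma> A \<Longrightarrow> derivable R (\<Pi> @ B # \<Sigma>) C \<Longrightarrow>
          derivable R (\<Pi> @ \<Gamma> @ Nab (Imp A B) # \<Sigma>) C"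
| R_imp: "derivable R (A # map Nab \<Gamma>) B \<Longrightarrow> derivable R \<Gamma> (Imp A B)"
| weak: "derivable R (\<Gamma> @ \<Sigma>) C \<Longrightarrow> derivable R (\<Gamma> @ A # \<Sigma>) C"
| contr: "derivable R (\<Gamma> @ A # A # \<Sigma>) C \<Longrightarrow> derivable R (\<Gamma> @ A # \<Sigma>) C"
| exch: "derivable R (\<Gamma> @ A # B # \<Sigma>) C \<Longrightarrow> derivable R (\<Gamma> @ B # A # \<Sigma>) C"
| scheme_N: "N \<in> R \<Longrightarrow> derivable R \<Gamma> A \<Longrightarrow> derivable R (map Nab \<Gamma>) (Nab A)"
| scheme_P: "P \<in> R \<Longrightarrow> derivable R \<Gamma> (Nab A) \<Longrightarrow> derivable R \<Gamma> A"
| scheme_F: "F \<in> R \<Longrightarrow> derivable R \<Gamma> A \<Longrightarrow> derivable R \<Gamma> (Nab A)"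
| scheme_wF: "wF \<in> R \<Longrightarrow> derivable R [Nab A] Bot \<Longrightarrow> derivable R [A] Bot"
| scheme_H: "H \<in> R \<Longrightarrow> derivable R (\<Gamma> @ map (\<lambda>(a, b). Imp a b) ps) C \<Longrightarrow>
             derivable R (map Nab \<Gamma> @ map (\<lambda>(a, b). Imp (Nab a) (Nab b)) ps) (Nab C)"

text \<open>The set of worlds W is the type 'w; le is the partial order, Rel the relation R.\<close>

definition kripke_model :: "('w \<Rightarrow> 'w \<Rightarrow> bool) \<Rightarrow> ('w \<Rightarrow> 'w \<Rightarrow> bool) \<Rightarrow> ('v \<Rightarrow> 'w set) \<Rightarrow> bool" where
  "kripke_model le Rel V \<longleftrightarrow>
     (\<forall>x. le x x) \<and> (\<forall>x y. le x y \<longrightarrow> le y x \<longrightarrow> x = y) \<and>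
     (\<forall>x y z. le x y \<longrightarrow> le y z \<longrightarrow> le x z) \<and>
     (\<forall>u v u' v'. Rel u v \<longrightarrow> le u' u \<longrightarrow> le v v' \<longrightarrow> Rel u' v') \<and>
     (\<forall>p x y. x \<in> V p \<longrightarrow> le x y \<longrightarrow> y \<in> V p)"

fun forces :: "('w \<Rightarrow> 'w \<Rightarrow> bool) \<Rightarrow> ('v \<Rightarrow> 'w set) \<Rightarrow> 'w \<Rightarrow> 'v fm \<Rightarrow> bool" where
  "forces Rel V w (Var p) \<longleftrightarrow> w \<in> V p"
| "forces Rel V w One \<longleftrightarrow> True"
| "forces Rel V w Top \<longleftrightarrow> True"
| "forces Rel V w Bot \<longleftrightarrow> False"
| "forces Rel V w (And A B) \<longleftrightarrow> forces Rel V w A \<and> forces Rel V w B"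
| "forces Rel V w (Tensor A B) \<longleftrightarrow> forces Rel V w A \<and> forces Rel V w B"
| "forces Rel V w (Or A B) \<longleftrightarrow> forces Rel V w A \<or> forces Rel V w B"
| "forces Rel V w (Imp A B) \<longleftrightarrow> (\<forall>v. Rel w v \<longrightarrow> forces Rel V v A \<longrightarrow> forces Rel V v B)"
| "forces Rel V w (Nab A) \<longleftrightarrow> (\<exists>v. Rel v w \<and> forces Rel V v A)"

definition valid_in :: "('w \<Rightarrow> 'w \<Rightarrow> bool) \<Rightarrow> ('v \<Rightarrow> 'w set) \<Rightarrow> 'v fm list \<Rightarrow> 'v fm \<Rightarrow> bool" where
  "valid_in Rel V \<Gamma> A \<longleftrightarrow> (\<forall>w. (\<forall>G\<in>set \<Gamma>. forces Rel V w G) \<longrightarrow> forces Rel V w A)"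

definition scheme_cond :: "scheme \<Rightarrow> ('w \<Rightarrow> 'w \<Rightarrow> bool) \<Rightarrow> ('w \<Rightarrow> 'w \<Rightarrow> bool) \<Rightarrow> bool" where
  "scheme_cond s le Rel = (case s of
      N \<Rightarrow> (\<exists>\<pi>. (\<forall>x y. le x y \<longrightarrow> le (\<pi> x) (\<pi> y)) \<and> (\<forall>u v. Rel u v \<longleftrightarrow> le u (\<pi> v)))
    | H \<Rightarrow> (\<exists>\<pi>. bij \<pi> \<and> (\<forall>x y. le x y \<longleftrightarrow> le (\<pi> x) (\<pi> y)) \<and> (\<forall>u v. Rel u v \<longleftrightarrow> le u (\<pi> v)))
    | P \<Rightarrow> (\<forall>u v. Rel u v \<longrightarrow> le u v)
    | F \<Rightarrow> (\<forall>w. Rel w w)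
    | wF \<Rightarrow> (\<forall>w. \<exists>v. Rel w v))"

definition K_model :: "scheme set \<Rightarrow> ('w \<Rightarrow> 'w \<Rightarrow> bool) \<Rightarrow> ('w \<Rightarrow> 'w \<Rightarrow> bool) \<Rightarrow> ('v \<Rightarrow> 'w set) \<Rightarrow> bool" where
  "K_model R le Rel V \<longleftrightarrow> kripke_model le Rel V \<and> (\<forall>s\<in>R. scheme_cond s le Rel)"

end

theory Submission
  imports Defs
begin

text \<open>Besides persistence of forcing along le, the
key observation is that in a frame with Rel u v \<longleftrightarrow> le u (\<pi> v) one has
w \<Vdash> \<nabla>A iff \<pi> w \<Vdash> A, so \<nabla> acts by precomposition with \<pi>; this gives (N). When \<pi> is
moreover a surjective order embedding, also w \<Vdash> \<nabla>A \<rightarrow> \<nabla>B iff \<pi> w \<Vdash> A \<rightarrow> B,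
which gives (H).\<close>

lemma forces_mono:
  assumes "kripke_model le Rel V"
  shows "forces Rel V x A \<Longrightarrow> le x y \<Longrightarrow> forces Rel V y A"
proof (induction A arbitrary: x y)
  case (Var p)
  then show ?case using assms unfolding kripke_model_def by auto
next
  case (Imp A B)
  have "Rel x v" if "Rel y v" for v
    using assms \<open>le x y\<close> that unfolding kripke_model_def by blast
  then show ?case using Imp.prems(1) by simp
next
  case (Nab A)
  have "Rel v y" if "Rel v x" for v
    using assms \<open>le x y\<close> that unfolding kripke_model_def by blast
  then show ?case using Nab.prems(1) by auto
qed auto

lemma forces_Nab_iff:
  assumes "kripke_model le Rel V" and Rel_iff: "\<And>u v. Rel u v \<longleftrightarrow> le u (\<pi> v)"
  shows "forces Rel V w (Nab A) \<longleftrightarrow> forces Rel V (\<pi> w) A"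
proof
  assume "forces Rel V w (Nab A)"
  then obtain v where "le v (\<pi> w)" and "forces Rel V v A" using Rel_iff by auto
  then show "forces Rel V (\<pi> w) A" using forces_mono[OF assms(1)] by blast
next
  assume "forces Rel V (\<pi> w) A"
  moreover have "le (\<pi> w) (\<pi> w)" using assms(1) unfolding kripke_model_def by blast
  ultimately show "forces Rel V w (Nab A)" using Rel_iff by auto
qed

lemma forces_Imp_Nab_iff:
  assumes "kripke_model le Rel V" and Rel_iff: "\<And>u v. Rel u v \<longleftrightarrow> le u (\<pi> v)"
    and le_iff: "\<And>x y. le x y \<longleftrightarrow> le (\<pi> x) (\<pi> y)" and "surj \<pi>"
  shows "forces Rel V w (Imp (Nab A) (Nab B)) \<longleftrightarrow> forces Rel V (\<pi> w) (Imp A B)"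
proof
  assume hyp: "forces Rel V w (Imp (Nab A) (Nab B))"
  show "forces Rel V (\<pi> w) (Imp A B)"
  proof (simp only: forces.simps(8), intro allI impI)
    fix v assume "Rel (\<pi> w) v" and "forces Rel V v A"
    obtain u where v: "v = \<pi> u" using \<open>surj \<pi>\<close> by blast
    have "Rel w u" using \<open>Rel (\<pi> w) v\<close> Rel_iff le_iff v by blast
    moreover have "forces Rel V u (Nab A)"
      using \<open>forces Rel V v A\<close> forces_Nab_iff[OF assms(1,2)] v by blast
    ultimately have "forces Rel V u (Nab B)" using hyp by simp
    then show "forces Rel V v B" using forces_Nab_iff[OF assms(1,2)] v by blast
  qed
next
  assume hyp: "forces Rel V (\<pi> w) (Imp A B)"
  show "forces Rel V w (Imp (Nab A) (Nab B))"
  proof (simp only: forces.simps(8), intro allI impI)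
    fix v assume "Rel w v" and "forces Rel V v (Nab A)"
    have "Rel (\<pi> w) (\<pi> v)" using \<open>Rel w v\<close> Rel_iff le_iff by blast
    moreover have "forces Rel V (\<pi> v) A"
      using \<open>forces Rel V v (Nab A)\<close> forces_Nab_iff[OF assms(1,2)] by blast
    ultimately have "forces Rel V (\<pi> v) B" using hyp by simp
    then show "forces Rel V v (Nab B)" using forces_Nab_iff[OF assms(1,2)] by blast
  qed
qed

lemma valid_in_map_Nab:
  assumes "kripke_model le Rel V" and "\<And>u v. Rel u v \<longleftrightarrow> le u (\<pi> v)"
    and "valid_in Rel V \<Gamma> A"
  shows "valid_in Rel V (map Nab \<Gamma>) (Nab A)"
  using assms(3) forces_Nab_iff[OF assms(1,2)] unfolding valid_in_def by simp

lemma valid_in_map_Nab_Imp: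
  assumes "kripke_model le Rel V" and "\<And>u v. Rel u v \<longleftrightarrow> le u (\<pi> v)"
    and "\<And>x y. le x y \<longleftrightarrow> le (\<pi> x) (\<pi> y)" and "surj \<pi>"
    and "valid_in Rel V (\<Gamma> @ map (\<lambda>(a, b). Imp a b) ps) C"
  shows "valid_in Rel V (map Nab \<Gamma> @ map (\<lambda>(a, b). Imp (Nab a) (Nab b)) ps) (Nab C)"
  unfolding valid_in_def
proof (intro allI impI)
  fix w
  assume prems: "\<forall>G\<in>set (map Nab \<Gamma> @ map (\<lambda>(a, b). Imp (Nab a) (Nab b)) ps). forces Rel V w G"
  have "forces Rel V (\<pi> w) G" if "G \<in> set \<Gamma>" for G
  proof -
    have "forces Rel V w (Nab G)" using prems that by (simp del: forces.simps)
    then show ?thesis using forces_Nab_iff[OF assms(1,2)] by blast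
  qed
  moreover have "forces Rel V (\<pi> w) (Imp a b)" if "(a, b) \<in> set ps" for a b
  proof -
    have "Imp (Nab a) (Nab b) \<in> set (map Nab \<Gamma> @ map (\<lambda>(a, b). Imp (Nab a) (Nab b)) ps)"
      using that by (simp add: rev_image_eqI)
    then have "forces Rel V w (Imp (Nab a) (Nab b))" by (rule bspec[OF prems])
    then show ?thesis by (rule forces_Imp_Nab_iff[of le Rel V \<pi>, OF assms(1-4), THEN iffD1])
  qed
  ultimately have "\<forall>G\<in>set (\<Gamma> @ map (\<lambda>(a, b). Imp a b) ps). forces Rel V (\<pi> w) G"
    by auto
  then show "forces Rel V w (Nab C)"
    using assms(5) forces_Nab_iff[OF assms(1,2)] unfolding valid_in_def by blast
qed

lemma valid_in_Nab_elim:
  assumes "kripke_model le Rel V" and "\<And>u v. Rel u v \<Longrightarrow> le u v"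
    and "valid_in Rel V \<Gamma> (Nab A)"
  shows "valid_in Rel V \<Gamma> A"
  unfolding valid_in_def
proof (intro allI impI)
  fix w assume "\<forall>G\<in>set \<Gamma>. forces Rel V w G"
  then have "forces Rel V w (Nab A)" using assms(3) unfolding valid_in_def by blast
  then obtain v where "Rel v w" and "forces Rel V v A" by auto
  then show "forces Rel V w A" using assms(2) forces_mono[OF assms(1)] by blast
qed

lemma valid_in_Nab_intro:
  assumes "\<And>w. Rel w w" and "valid_in Rel V \<Gamma> A"
  shows "valid_in Rel V \<Gamma> (Nab A)"
  using assms unfolding valid_in_def by auto

lemma valid_in_Bot_Nab_elim:
  assumes "\<And>w. \<exists>v. Rel w v" and "valid_in Rel V [Nab A] Bot"
  shows "valid_in Rel V [A] Bot"
  using assms unfolding valid_in_def by auto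

theorem theorem8p5:
  fixes R :: "scheme set" and \<Gamma> :: "'v fm list" and A :: "'v fm"
    and le Rel :: "'w \<Rightarrow> 'w \<Rightarrow> bool" and V :: "'v \<Rightarrow> 'w set"
  assumes "derivable R \<Gamma> A"
    and "K_model R le Rel V"
  shows "valid_in Rel V \<Gamma> A"
proof -
  have model: "kripke_model le Rel V" and cond: "\<And>s. s \<in> R \<Longrightarrow> scheme_cond s le Rel"
    using assms(2) unfolding K_model_def by auto
  from assms(1) show ?thesis
  proof (induction rule: derivable.induct)
    case (scheme_N \<Gamma> A)
    obtain \<pi> where "\<And>u v. Rel u v \<longleftrightarrow> le u (\<pi> v)"
      using cond[OF scheme_N.hyps(1)] unfolding scheme_cond_def by auto
    then show ?case using valid_in_map_Nab[OF model] scheme_N.IH by blast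
  next
    case (scheme_H \<Gamma> ps C)
    obtain \<pi> where "bij \<pi>" and "\<And>x y. le x y \<longleftrightarrow> le (\<pi> x) (\<pi> y)"
      and "\<And>u v. Rel u v \<longleftrightarrow> le u (\<pi> v)"
      using cond[OF scheme_H.hyps(1)] unfolding scheme_cond_def by auto
    then show ?case using valid_in_map_Nab_Imp[OF model] bij_is_surj scheme_H.IH by blast
  next
    case (scheme_P \<Gamma> A)
    have "\<And>u v. Rel u v \<Longrightarrow> le u v"
      using cond[OF scheme_P.hyps(1)] unfolding scheme_cond_def by auto
    then show ?case using valid_in_Nab_elim[OF model] scheme_P.IH by blast
  next
    case (scheme_F \<Gamma> A)
    have "\<And>w. Rel w w" using cond[OF scheme_F.hyps(1)] unfolding scheme_cond_def by auto
    then show ?case using valid_in_Nab_intro scheme_F.IH by blast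
  next
    case (scheme_wF A)
    have "\<And>w. \<exists>v. Rel w v" using cond[OF scheme_wF.hyps(1)] unfolding scheme_cond_def by auto
    then show ?case using valid_in_Bot_Nab_elim scheme_wF.IH by blast
  qed (unfold valid_in_def, auto; fastforce)+
qed

end
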